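(* Let $\lambda\in(\frac16,\frac56)$ and $x\in[0,1]\setminus\mathcal E$. For every $n\ge0$, $I_n(x)$ is exactly the open interval of maximal length containing $x$ on which $F^\lambda_n$ is affine. In particular $$m_n(x)=\frac{F^\lambda_n(x)-F^\lambda_n(a_n(x))}{x-a_n(x)}$$ and $\mathrm{sgn}(m_n(x))=\mathrm{sgn}(\beta_{1,2}(x,n))\,\varepsilon_n(x)$.
   Context: Construction: $F^\lambda_0\equiv0$ on $[0,1]$ (one interval of generation $0$). Given $F^\lambda_n$ with its $4^n$ closed intervals of generation $n$ (covering $[0,1]$, disjoint interiors, $F^\lambda_n$ affine on each), on each interval $[a,b]$ of generation $n$, with $\ell=b-a$ and slope $m$, $F^\lambda_{n+1}$ coincides with $F^\lambda_n$ at $a,a+\ell/3,a+2\ell/3,b$, equals $F^\lambda_n(a+\ell/2)+\lambda\ell\sqrt{1+m^2}$ at $a+\ell/2$, and is affine on $[a,a+\ell/3],[a+\ell/3,a+\ell/2],[a+\ell/2,a+2\ell/3],[a+2\ell/3,b]$ (generation $n+1$). Dynamics: $T(x)=3x$ on $[0,\frac13)$, $6x-2$ on $[\frac13,\frac12)$, $4-6x$ on $[\frac12,\frac23)$, $3x-2$ on $[\frac23,1]$; $U(x)=0,1,2,3$ and $\widetilde U(x)=0,\frac13,\frac23,\frac23$ on these intervals respectively; $u_n(x)=U(T^nx)$, $\widetilde u_n(x)=\widetilde U(T^nx)$; $\beta_i(x,n)=\#\{k<n:u_k(x)=i\}$, $\beta_{i,j}=\beta_i+\beta_j$; $\varepsilon_n(x)=(-1)^{\beta_2(x,n)}$,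 $\ell_n(x)=3^{-\beta_{0,3}(x,n)}6^{-\beta_{1,2}(x,n)}$, $a_0(x)=0$, $a_n(x)=\sum_{k=0}^{n-1}\widetilde u_k(x)\varepsilon_k(x)\ell_k(x)$; $I_n(x)$ is the open interval with endpoints $a_n(x)$ and $a_n(x)+\varepsilon_n(x)\ell_n(x)$. $\mathcal E$ is the set of $x$ whose digit sequence $(u_n(x))$ is eventually constantly $0$ or eventually constantly $3$; for $x\notin\mathcal E$, $F^\lambda_n$ is differentiable at $x$ and $m_n(x)$ denotes its slope at $x$. $\mathrm{sgn}$ is the sign function ($\mathrm{sgn}(0)=0$). *)

theory Defs
  imports "HOL-Analysis.Analysis"
begin

text \<open>Closed intervals of generation n, represented as pairs (a,b) (they do not depend on lambda).\<close>
fun gen :: "nat \<Rightarrow> (real \<times> real) set" where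
  "gen 0 = {(0, 1)}"
| "gen (Suc n) = (\<Union>(a, b) \<in> gen n.
      {(a, a + (b - a) / 3), (a + (b - a) / 3, a + (b - a) / 2),
       (a + (b - a) / 2, a + 2 * (b - a) / 3), (a + 2 * (b - a) / 3, b)})"

definition hat :: "real \<Rightarrow> real \<Rightarrow> real \<Rightarrow> real" where
  "hat a b x = max 0 (1 - \<bar>x - (a + (b - a) / 2)\<bar> / ((b - a) / 6))"

text \<open>F^lambda_{n+1} = F^lambda_n plus, on each generation-n interval [a,b] with slope m,
  the bump of height lambda*l*sqrt(1+m^2) at a+l/2; this is exactly the piecewise affine
  function that coincides with F^lambda_n at a, a+l/3, a+2l/3, b and is raised by
  lambda*l*sqrt(1+m^2) at a+l/2.  The slope m of the affine function F^lambda_n on [a,b]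
  is (F^lambda_n b - F^lambda_n a)/(b-a).\<close>
fun Flam :: "real \<Rightarrow> nat \<Rightarrow> real \<Rightarrow> real" where
  "Flam lam 0 = (\<lambda>x. 0)"
| "Flam lam (Suc n) = (\<lambda>x. Flam lam n x +
      (\<Sum>(a, b) \<in> gen n.
         lam * (b - a) * sqrt (1 + ((Flam lam n b - Flam lam n a) / (b - a))\<^sup>2) * hat a b x))"

definition T :: "real \<Rightarrow> real" where
  "T x = (if x < 1/3 then 3 * x else if x < 1/2 then 6 * x - 2
          else if x < 2/3 then 4 - 6 * x else 3 * x - 2)"

definition U :: "real \<Rightarrow> nat" where
  "U x = (if x < 1/3 then 0 else if x < 1/2 then 1 else if x < 2/3 then 2 else 3)"

definition Ut :: "real \<Rightarrow> real" where
  "Ut x = (if x < 1/3 then 0 else if x < 1/2 then 1/3 else if x < 2/3 then 2/3 else 2/3)"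

definition u :: "nat \<Rightarrow> real \<Rightarrow> nat" where
  "u n x = U ((T ^^ n) x)"

definition ut :: "nat \<Rightarrow> real \<Rightarrow> real" where
  "ut n x = Ut ((T ^^ n) x)"

definition beta :: "nat \<Rightarrow> real \<Rightarrow> nat \<Rightarrow> nat" where
  "beta i x n = card {k. k < n \<and> u k x = i}"

definition beta2 :: "nat \<Rightarrow> nat \<Rightarrow> real \<Rightarrow> nat \<Rightarrow> nat" where
  "beta2 i j x n = beta i x n + beta j x n"

definition eps :: "nat \<Rightarrow> real \<Rightarrow> real" where
  "eps n x = (-1) ^ beta 2 x n"

definition ell :: "nat \<Rightarrow> real \<Rightarrow> real" where
  "ell n x = 1 / (3 ^ beta2 0 3 x n * 6 ^ beta2 1 2 x n)"

definition an :: "nat \<Rightarrow> real \<Rightarrow> real" where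
  "an n x = (\<Sum>k<n. ut k x * eps k x * ell k x)"

definition In :: "nat \<Rightarrow> real \<Rightarrow> real set" where
  "In n x = {min (an n x) (an n x + eps n x * ell n x) <..< max (an n x) (an n x + eps n x * ell n x)}"

definition E :: "real set" where
  "E = {x. \<exists>N. (\<forall>k\<ge>N. u k x = 0) \<or> (\<forall>k\<ge>N. u k x = 3)}"

definition affine_on :: "(real \<Rightarrow> real) \<Rightarrow> real set \<Rightarrow> bool" where
  "affine_on f J \<longleftrightarrow> (\<exists>c d. \<forall>y\<in>J. f y = c * y + d)"

end

(*
  F_(n+1) is F_n plus, on each generation-n interval [a,b] of slope m, a hat of height
  lambda (b - a) sqrt (1 + m^2). So F_n is affine on every generation-n interval, and the four
  children of [a,b] carry the slopes m, m + s, m - s, m with s = 6 lambda sqrt (1 + m^2) > 0.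
  Hence every endpoint of a generation-n interval inside (0,1) is a corner of F_n, and these
  intervals are the maximal intervals of affinity.

  The digit u_n(x) says which child of I_n(x) contains x: the four affine inverse branches of T
  give x = a_n + T^n(x) (b_n - a_n) with b_n = a_n + eps_n ell_n, the branch on [1/2,2/3)
  reversing orientation, which is what eps_n records. By induction I_n(x) is a generation-n
  interval; as lambda > 1/6 gives s > |m|, a middle digit makes the sign of the slope eps_(n+1),
  while an outer digit changes neither the slope nor beta_(1,2) nor eps. Finally x outside E
  keeps T^n(x) away from the fixed points 0 and 1, so x is interior to I_n(x).
*)
theory Submission
  imports Defs
begin

section \<open>Slopes on sets of reals\<close>

definition slope :: "(real \<Rightarrow> real) \<Rightarrow> real \<Rightarrow> real \<Rightarrow> real" where
  "slope f a b = (f b - f a) / (b - a)"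

definition has_slope_on :: "(real \<Rightarrow> real) \<Rightarrow> real \<Rightarrow> real set \<Rightarrow> bool" where
  "has_slope_on f k S \<longleftrightarrow> (\<forall>y\<in>S. \<forall>z\<in>S. f z - f y = k * (z - y))"

lemma slope_commute: "slope f a b = slope f b a"
  unfolding slope_def by (metis minus_diff_eq minus_divide_divide)

lemma slope_min_max: "slope f (min p q) (max p q) = slope f p q"
  by (cases "p \<le> q") (simp_all add: min_def max_def slope_commute)

lemma has_slope_on_subset: "has_slope_on f k S \<Longrightarrow> R \<subseteq> S \<Longrightarrow> has_slope_on f k R"
  unfolding has_slope_on_def by blast

lemma has_slope_on_add:
  "has_slope_on f k S \<Longrightarrow> has_slope_on g l S \<Longrightarrow> has_slope_on (\<lambda>y. f y + g y) (k + l) S"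
  unfolding has_slope_on_def by (simp add: algebra_simps)

lemma has_slope_on_cmult:
  "has_slope_on f k S \<Longrightarrow> has_slope_on (\<lambda>y. c * f y) (c * k) S"
  unfolding has_slope_on_def by (simp add: right_diff_distrib[symmetric])

lemma has_slope_on_cong:
  "has_slope_on f k S \<Longrightarrow> (\<And>y. y \<in> S \<Longrightarrow> g y = f y) \<Longrightarrow> has_slope_on g k S"
  unfolding has_slope_on_def by simp

lemma slope_eq_if_has_slope_on:
  "has_slope_on f k S \<Longrightarrow> a \<in> S \<Longrightarrow> b \<in> S \<Longrightarrow> a \<noteq> b \<Longrightarrow> slope f a b = k"
  unfolding has_slope_on_def slope_def by simp

lemma affine_on_iff_has_slope_on: "affine_on f S \<longleftrightarrow> (\<exists>k. has_slope_on f k S)"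
proof
  assume "affine_on f S"
  then show "\<exists>k. has_slope_on f k S"
    unfolding affine_on_def has_slope_on_def by (metis right_diff_distrib add_diff_cancel_right)
next
  assume "\<exists>k. has_slope_on f k S"
  then obtain k where k: "has_slope_on f k S" ..
  show "affine_on f S"
  proof (cases "S = {}")
    case False
    then obtain y0 where "y0 \<in> S" by blast
    with k have "\<forall>y\<in>S. f y = k * y + (f y0 - k * y0)"
      unfolding has_slope_on_def by (simp add: algebra_simps)
    then show ?thesis unfolding affine_on_def by blast
  qed (simp add: affine_on_def)
qed

lemma has_slope_on_imp_has_field_derivative:
  assumes "has_slope_on f k S" "open S" "x \<in> S"
  shows "(f has_field_derivative k) (at x)"
proof (rule has_field_derivative_transform_within_open)
  show "((\<lambda>y. f x + k * (y - x)) has_field_derivative k) (at x)"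
    by (auto intro!: derivative_eq_intros)
  show "f x + k * (y - x) = f y" if "y \<in> S" for y
    using assms(1,3) that unfolding has_slope_on_def by (metis add.commute diff_add_cancel)
qed (use assms in auto)

lemma not_affine_on_across_corner:
  assumes "has_slope_on f k {a..p}" "has_slope_on f k' {p..b}" "a < p" "p < b" "k \<noteq> k'"
    and "p \<in> {c<..<d}"
  shows "\<not> affine_on f {c<..<d}"
proof
  assume "affine_on f {c<..<d}"
  then obtain K where K: "has_slope_on f K {c<..<d}" unfolding affine_on_iff_has_slope_on ..
  define y where "y = max a c / 2 + p / 2"
  define z where "z = min b d / 2 + p / 2"
  have y: "y \<in> {a..p} \<inter> {c<..<d}" "y \<noteq> p" and z: "z \<in> {p..b} \<inter> {c<..<d}" "z \<noteq> p"
    using assms(3-6) unfolding y_def z_def by auto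
  have "k = K" using slope_eq_if_has_slope_on[OF assms(1), of y p] slope_eq_if_has_slope_on[OF K, of y p]
    y assms(3,6) by auto
  moreover have "k' = K" using slope_eq_if_has_slope_on[OF assms(2), of p z] slope_eq_if_has_slope_on[OF K, of p z]
    z assms(4,6) by auto
  ultimately show False using assms(5) by simp
qed

lemma between_in_Ioo:
  fixes p q t :: real
  assumes "p \<noteq> q" "0 < t" "t < 1"
  shows "p + t * (q - p) \<in> {min p q<..<max p q}"
proof (cases "p < q")
  case True
  have "0 < t * (q - p)" "t * (q - p) < q - p"
    using True assms mult_strict_right_mono[of t 1 "q - p"] by simp_all
  then have "p < p + t * (q - p)" "p + t * (q - p) < q" by linarith+
  then show ?thesis using True by simp
next
  case False
  have "0 < t * (p - q)" "t * (p - q) < p - q"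
    using False assms mult_strict_right_mono[of t 1 "p - q"] by simp_all
  moreover have "t * (q - p) = - (t * (p - q))" by (simp add: algebra_simps)
  ultimately have "q < p + t * (q - p)" "p + t * (q - p) < p" by linarith+
  then show ?thesis using False by simp
qed

lemma sgn_add_dominant: "\<bar>m\<bar> < s \<Longrightarrow> e = 1 \<or> e = -1 \<Longrightarrow> sgn (m + e * s) = e"
  for m s e :: real
  by (auto simp: sgn_if)

lemma funpow_fixed: "f p = p \<Longrightarrow> (f ^^ k) p = p"
  by (induct k) auto

section \<open>Generation intervals\<close>

lemma less_4_cases: "(j::nat) < 4 \<Longrightarrow> j = 0 \<or> j = 1 \<or> j = 2 \<or> j = 3"
  by auto

definition node :: "nat \<Rightarrow> real" where
  "node j = [0, 1/3, 1/2, 2/3, 1] ! j"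

lemma node_strict_mono: "i < j \<Longrightarrow> j \<le> 4 \<Longrightarrow> node i < node j"
  by (auto simp: node_def less_Suc_eq numeral_eq_Suc le_Suc_eq)

lemma node_bounds: "j \<le> 4 \<Longrightarrow> 0 \<le> node j \<and> node j \<le> 1"
  by (auto simp: node_def numeral_eq_Suc le_Suc_eq)

lemma node_reflect: "j \<le> 4 \<Longrightarrow> node (4 - j) = 1 - node j"
  by (auto simp: node_def le_Suc_eq numeral_eq_Suc)

definition child :: "nat \<Rightarrow> real \<times> real \<Rightarrow> real \<times> real" where
  "child j = (\<lambda>(a, b). (a + node j * (b - a), a + node (Suc j) * (b - a)))"

text \<open>The simplifier rewrites \<open>1 :: nat\<close> to \<open>Suc 0\<close>, hence the form of the second
  equation.\<close>
lemma child_simps: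
  "child 0 (a, b) = (a, a + (b - a) / 3)"
  "child (Suc 0) (a, b) = (a + (b - a) / 3, a + (b - a) / 2)"
  "child 2 (a, b) = (a + (b - a) / 2, a + 2 * (b - a) / 3)"
  "child 3 (a, b) = (a + 2 * (b - a) / 3, b)"
  by (simp_all add: child_def node_def numeral_eq_Suc)

lemma lessThan_4: "{..<4::nat} = {0, 1, 2, 3}"
  by (auto dest: less_4_cases)

lemma gen_Suc_eq: "gen (Suc n) = (\<Union>q\<in>gen n. (\<lambda>j. child j q) ` {..<4})"
  unfolding lessThan_4 by (auto simp: child_simps)

lemma gen_Suc_iff: "p \<in> gen (Suc n) \<longleftrightarrow> (\<exists>q\<in>gen n. \<exists>j<4. p = child j q)"
  unfolding gen_Suc_eq by blast

declare gen.simps(2)[simp del]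

lemma child_in_gen_Suc: "q \<in> gen n \<Longrightarrow> j < 4 \<Longrightarrow> child j q \<in> gen (Suc n)"
  unfolding gen_Suc_iff by blast

lemma finite_gen: "finite (gen n)"
  by (induct n) (auto simp: gen_Suc_eq)

lemma child_bounds:
  assumes "a < b" "j < 4" "child j (a, b) = (c, d)"
  shows "a \<le> c" "c < d" "d \<le> b"
proof -
  have "0 \<le> node j" "node j < node (Suc j)" "node (Suc j) \<le> 1"
    using assms(2) node_bounds node_strict_mono by auto
  then have "0 \<le> node j * (b - a)" "node j * (b - a) < node (Suc j) * (b - a)"
    "node (Suc j) * (b - a) \<le> b - a"
    using assms(1) by (simp_all add: mult_le_cancel_right1)
  then show "a \<le> c" "c < d" "d \<le> b"
    using assms(3) by (auto simp: child_def)
qed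

lemma child_ordered:
  assumes "a < b" "i < j" "j < 4"
  shows "snd (child i (a, b)) \<le> fst (child j (a, b))"
  using assms node_strict_mono[of i j] node_strict_mono[of "Suc i" j]
  by (cases "Suc i = j") (auto simp: child_def)

lemma gen_bounds: "(a, b) \<in> gen n \<Longrightarrow> 0 \<le> a \<and> a < b \<and> b \<le> 1"
proof (induct n arbitrary: a b)
  case (Suc n)
  then obtain a0 b0 j where p: "(a0, b0) \<in> gen n" "j < 4" "child j (a0, b0) = (a, b)"
    unfolding gen_Suc_iff by fastforce
  with Suc.hyps have "0 \<le> a0" "a0 < b0" "b0 \<le> 1" by auto
  with child_bounds[OF _ p(2,3)] show ?case by fastforce
qed simp

lemma gen_disjoint:
  "(a, b) \<in> gen n \<Longrightarrow> (a', b') \<in> gen n \<Longrightarrow> (a, b) \<noteq> (a', b') \<Longrightarrow> b \<le> a' \<or> b' \<le> a"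
proof (induct n arbitrary: a b a' b')
  case (Suc n)
  obtain a0 b0 j where p: "(a0, b0) \<in> gen n" "j < 4" "child j (a0, b0) = (a, b)"
    using Suc.prems(1) unfolding gen_Suc_iff by fastforce
  obtain a1 b1 j' where p': "(a1, b1) \<in> gen n" "j' < 4" "child j' (a1, b1) = (a', b')"
    using Suc.prems(2) unfolding gen_Suc_iff by fastforce
  show ?case
  proof (cases "(a0, b0) = (a1, b1)")
    case True
    then have "j \<noteq> j'" using p p' Suc.prems(3) by auto
    then show ?thesis
      using child_ordered[of a0 b0 j j'] child_ordered[of a0 b0 j' j] True p p' gen_bounds[OF p(1)]
      by (cases "j < j'") auto
  next
    case False
    then show ?thesis
      using Suc.hyps[OF p(1) p'(1)] child_bounds[OF _ p(2,3)] child_bounds[OF _ p'(2,3)]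
        gen_bounds[OF p(1)] gen_bounds[OF p'(1)] by fastforce
  qed
qed simp

section \<open>Slopes of \<open>Flam\<close> on generation intervals\<close>

lemma hat_eq_0:
  "a < b \<Longrightarrow> y \<le> a + (b - a) / 3 \<or> a + 2 * (b - a) / 3 \<le> y \<Longrightarrow> hat a b y = 0"
  unfolding hat_def by (auto simp: field_simps abs_if max_def)

lemma hat_left:
  assumes "a < b" "a + (b - a) / 3 \<le> y" "y \<le> a + (b - a) / 2"
  shows "hat a b y = 6 * (y - a) / (b - a) - 2"
proof -
  have "\<bar>y - (a + (b - a) / 2)\<bar> = a + (b - a) / 2 - y" using assms by simp
  moreover have "0 \<le> 6 * (y - a) / (b - a) - 2" using assms by (simp add: field_simps)
  moreover have "1 - (a + (b - a) / 2 - y) / ((b - a) / 6) = 6 * (y - a) / (b - a) - 2"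
    using assms by (simp add: field_simps)
  ultimately show ?thesis unfolding hat_def by simp
qed

lemma hat_right:
  assumes "a < b" "a + (b - a) / 2 \<le> y" "y \<le> a + 2 * (b - a) / 3"
  shows "hat a b y = 4 - 6 * (y - a) / (b - a)"
proof -
  have "\<bar>y - (a + (b - a) / 2)\<bar> = y - (a + (b - a) / 2)" using assms by simp
  moreover have "0 \<le> 4 - 6 * (y - a) / (b - a)" using assms by (simp add: field_simps)
  moreover have "1 - (y - (a + (b - a) / 2)) / ((b - a) / 6) = 4 - 6 * (y - a) / (b - a)"
    using assms by (simp add: field_simps)
  ultimately show ?thesis unfolding hat_def by simp
qed

definition bump_slope :: "nat \<Rightarrow> real" where
  "bump_slope j = [0, 1, -1, 0] ! j"

lemma bump_slope_neq: "0 < j \<Longrightarrow> j < 4 \<Longrightarrow> bump_slope (j - 1) \<noteq> bump_slope j"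
  by (auto simp: bump_slope_def dest!: less_4_cases)

lemma bump_slope_reflect: "j < 4 \<Longrightarrow> bump_slope (3 - j) = - bump_slope j"
  by (auto simp: bump_slope_def dest!: less_4_cases)

lemma hat_has_slope_on_child:
  assumes "a < b" "j < 4" "child j (a, b) = (c, d)"
  shows "has_slope_on (hat a b) (6 * bump_slope j / (b - a)) {c..d}"
  using less_4_cases[OF assms(2)]
proof (elim disjE)
  assume "j = 0"
  then show ?thesis using assms
    by (auto simp: has_slope_on_def bump_slope_def child_simps hat_eq_0)
next
  assume "j = 3"
  then show ?thesis using assms
    by (auto simp: has_slope_on_def bump_slope_def child_simps hat_eq_0)
next
  assume "j = 1"
  have "hat a b z - hat a b y = 6 * bump_slope j / (b - a) * (z - y)"
    if "y \<in> {c..d}" "z \<in> {c..d}" for y z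
  proof -
    have "hat a b z - hat a b y = 6 * (z - a) / (b - a) - 6 * (y - a) / (b - a)"
      using assms that \<open>j = 1\<close> by (auto simp: child_simps hat_left)
    also have "\<dots> = 6 * 1 / (b - a) * (z - y)"
      by (simp add: diff_divide_distrib[symmetric] algebra_simps)
    finally show ?thesis using \<open>j = 1\<close> by (simp add: bump_slope_def)
  qed
  then show ?thesis by (simp add: has_slope_on_def)
next
  assume "j = 2"
  have "hat a b z - hat a b y = 6 * bump_slope j / (b - a) * (z - y)"
    if "y \<in> {c..d}" "z \<in> {c..d}" for y z
  proof -
    have "hat a b z - hat a b y = 6 * (y - a) / (b - a) - 6 * (z - a) / (b - a)"
      using assms that \<open>j = 2\<close> by (auto simp: child_simps hat_right)
    also have "\<dots> = 6 / (b - a) * (y - z)"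
      by (simp add: diff_divide_distrib[symmetric] algebra_simps)
    also have "\<dots> = 6 * (- 1) / (b - a) * (z - y)"
      using assms(1) by (simp add: field_simps)
    finally show ?thesis using \<open>j = 2\<close> by (simp add: bump_slope_def numeral_eq_Suc)
  qed
  then show ?thesis by (simp add: has_slope_on_def)
qed

definition slope_jump :: "real \<Rightarrow> real \<Rightarrow> real" where
  "slope_jump lam m = 6 * lam * sqrt (1 + m\<^sup>2)"

lemma slope_jump_pos: "0 < lam \<Longrightarrow> 0 < slope_jump lam m"
  unfolding slope_jump_def by (simp add: add_pos_nonneg)

text \<open>This is the only use of \<open>1/6 < lam\<close>.\<close>
lemma abs_less_slope_jump:
  assumes "1/6 < lam" shows "\<bar>m\<bar> < slope_jump lam m"
proof -
  have "\<bar>m\<bar> < sqrt (1 + m\<^sup>2)"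
    using real_sqrt_less_mono[of "m\<^sup>2" "1 + m\<^sup>2"] by simp
  also have "\<dots> \<le> 6 * lam * sqrt (1 + m\<^sup>2)"
    using assms mult_right_mono[of 1 "6 * lam" "sqrt (1 + m\<^sup>2)"] by simp
  finally show ?thesis unfolding slope_jump_def .
qed

lemma Flam_Suc_eq_on_gen:
  assumes "(a, b) \<in> gen n" "y \<in> {a..b}"
  shows "Flam lam (Suc n) y
    = Flam lam n y + lam * (b - a) * sqrt (1 + (slope (Flam lam n) a b)\<^sup>2) * hat a b y"
proof -
  let ?f = "\<lambda>(a, b). lam * (b - a) * sqrt (1 + ((Flam lam n b - Flam lam n a) / (b - a))\<^sup>2) * hat a b y"
  have "sum ?f (gen n - {(a, b)}) = 0"
  proof (rule sum.neutral, rule ballI)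
    fix p assume "p \<in> gen n - {(a, b)}"
    then obtain a' b' where "p = (a', b')" "(a', b') \<in> gen n" "(a', b') \<noteq> (a, b)"
      by (cases p) auto
    moreover from calculation(2,3) have "hat a' b' y = 0"
      using gen_disjoint[OF assms(1)] gen_bounds[of a' b' n] gen_bounds[OF assms(1)] assms(2)
      by (intro hat_eq_0) (fastforce simp: field_simps)+
    ultimately show "?f p = 0" by simp
  qed
  then show ?thesis
    using sum.remove[OF finite_gen assms(1), of ?f] by (simp add: slope_def)
qed

declare Flam.simps(2)[simp del]

lemma Flam_Suc_has_slope_on_child:
  assumes ab: "(a, b) \<in> gen n" and m: "has_slope_on (Flam lam n) m {a..b}"
    and j: "j < 4" "child j (a, b) = (c, d)"
  shows "has_slope_on (Flam lam (Suc n)) (m + slope_jump lam m * bump_slope j) {c..d}"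
proof -
  have "a < b" using gen_bounds[OF ab] by simp
  then have cd: "{c..d} \<subseteq> {a..b}" using child_bounds[OF _ j] by auto
  have "slope (Flam lam n) a b = m"
    using slope_eq_if_has_slope_on[OF m] \<open>a < b\<close> by simp
  then have eq: "Flam lam (Suc n) y = Flam lam n y + lam * (b - a) * sqrt (1 + m\<^sup>2) * hat a b y"
    if "y \<in> {c..d}" for y
    using Flam_Suc_eq_on_gen[OF ab] cd that by auto
  have "lam * (b - a) * sqrt (1 + m\<^sup>2) * (6 * bump_slope j / (b - a)) = slope_jump lam m * bump_slope j"
    using \<open>a < b\<close> by (simp add: slope_jump_def)
  then show ?thesis
    using has_slope_on_add[OF has_slope_on_subset[OF m cd]
        has_slope_on_cmult[OF hat_has_slope_on_child[OF \<open>a < b\<close> j],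
          of "lam * (b - a) * sqrt (1 + m\<^sup>2)"]]
    by (auto intro: has_slope_on_cong[OF _ eq])
qed

lemma Flam_has_slope_on_gen:
  "(a, b) \<in> gen n \<Longrightarrow> has_slope_on (Flam lam n) (slope (Flam lam n) a b) {a..b}"
proof (induct n arbitrary: a b)
  case (Suc n)
  then obtain a0 b0 j where p: "(a0, b0) \<in> gen n" "j < 4" "child j (a0, b0) = (a, b)"
    unfolding gen_Suc_iff by fastforce
  note slope_on_child = Flam_Suc_has_slope_on_child[OF p(1) Suc.hyps[OF p(1)] p(2,3)]
  moreover have "a < b" using gen_bounds[OF Suc.prems] by simp
  ultimately show ?case using slope_eq_if_has_slope_on[OF slope_on_child] by simp
qed (simp add: has_slope_on_def slope_def)

lemma slope_Flam_Suc_child: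
  assumes "(a, b) \<in> gen n" "j < 4" "child j (a, b) = (c, d)"
  shows "slope (Flam lam (Suc n)) c d
    = slope (Flam lam n) a b + slope_jump lam (slope (Flam lam n) a b) * bump_slope j"
proof -
  have "c < d" using child_bounds[OF _ assms(2,3)] gen_bounds[OF assms(1)] by simp
  then show ?thesis
    using slope_eq_if_has_slope_on[OF Flam_Suc_has_slope_on_child[OF assms(1)
          Flam_has_slope_on_gen[OF assms(1)] assms(2,3)]] by simp
qed

text \<open>For \<open>q < p\<close> the points \<open>p'\<close>, \<open>q'\<close> cut out child \<open>3 - j\<close> of \<open>(q, p)\<close>,
  where the hat slope is reversed.\<close>
lemma oriented_child:
  assumes pq: "(min p q, max p q) \<in> gen n" and j: "j < 4"
    and p'_def: "p' = p + node j * (q - p)" and q'_def: "q' = p + node (Suc j) * (q - p)"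
  shows "(min p' q', max p' q') \<in> gen (Suc n)"
    and "slope (Flam lam (Suc n)) p' q' = slope (Flam lam n) p q
      + sgn (q - p) * slope_jump lam (slope (Flam lam n) p q) * bump_slope j"
proof -
  define m where "m = slope (Flam lam n) p q"
  have "p \<noteq> q" using gen_bounds[OF pq] by auto
  then consider "p < q" | "q < p" by linarith
  then have "(min p' q', max p' q') \<in> gen (Suc n)
    \<and> slope (Flam lam (Suc n)) p' q' = m + sgn (q - p) * slope_jump lam m * bump_slope j"
  proof cases
    case 1
    have c: "child j (p, q) = (p', q')" unfolding p'_def q'_def child_def by simp
    have "(p, q) \<in> gen n" using pq 1 by simp
    moreover have "p' < q'" using child_bounds[OF 1 j c] by simp
    ultimately show ?thesis
      using child_in_gen_Suc[of "(p, q)" n j] slope_Flam_Suc_child[OF _ j c, where lam = lam] j 1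
      by (simp add: c m_def)
  next
    case 2
    have reflect: "node (3 - j) = 1 - node (Suc j)" "node (Suc (3 - j)) = 1 - node j"
      using node_reflect[of j] node_reflect[of "Suc j"] j by (simp_all add: Suc_diff_le[symmetric])
    have c: "child (3 - j) (q, p) = (q', p')"
      unfolding p'_def q'_def child_def reflect by (simp add: algebra_simps)
    have "(q, p) \<in> gen n" using pq 2 by simp
    moreover have "q' < p'" using child_bounds[OF 2 _ c] by simp
    moreover have "slope (Flam lam n) q p = m" unfolding m_def by (rule slope_commute)
    ultimately show ?thesis
      using child_in_gen_Suc[of "(q, p)" n "3 - j"] slope_Flam_Suc_child[OF _ _ c, where lam = lam]
        2 bump_slope_reflect[OF j]
      by (simp add: c slope_commute[of _ p' q'])
  qed
  then show "(min p' q', max p' q') \<in> gen (Suc n)"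
    and "slope (Flam lam (Suc n)) p' q' = slope (Flam lam n) p q
      + sgn (q - p) * slope_jump lam (slope (Flam lam n) p q) * bump_slope j"
    unfolding m_def by blast+
qed

section \<open>Corners\<close>

definition kink :: "real \<Rightarrow> nat \<Rightarrow> real \<Rightarrow> bool" where
  "kink lam n p \<longleftrightarrow> (\<exists>a b. (a, p) \<in> gen n \<and> (p, b) \<in> gen n
     \<and> slope (Flam lam n) a p \<noteq> slope (Flam lam n) p b)"

lemma kink_Suc:
  assumes "kink lam n p" shows "kink lam (Suc n) p"
proof -
  obtain a b where ab: "(a, p) \<in> gen n" "(p, b) \<in> gen n"
    "slope (Flam lam n) a p \<noteq> slope (Flam lam n) p b"
    using assms unfolding kink_def by blast
  define a' where "a' = a + 2 * (p - a) / 3"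
  define b' where "b' = p + (b - p) / 3"
  have a': "child 3 (a, p) = (a', p)" and b': "child 0 (p, b) = (p, b')"
    unfolding a'_def b'_def by (simp_all add: child_simps)
  have "(a', p) \<in> gen (Suc n)" "(p, b') \<in> gen (Suc n)"
    using child_in_gen_Suc[OF ab(1), of 3] child_in_gen_Suc[OF ab(2), of 0] a' b' by simp_all
  moreover have "slope (Flam lam (Suc n)) a' p \<noteq> slope (Flam lam (Suc n)) p b'"
    using slope_Flam_Suc_child[OF ab(1) _ a'] slope_Flam_Suc_child[OF ab(2) _ b'] ab(3)
    by (simp add: bump_slope_def)
  ultimately show ?thesis unfolding kink_def by blast
qed

lemma kink_at_new_node:
  assumes "0 < lam" "(a, b) \<in> gen n" "0 < j" "j < 4"
  shows "kink lam (Suc n) (fst (child j (a, b)))"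
proof -
  obtain c where c: "child (j - 1) (a, b) = (c, fst (child j (a, b)))"
    using \<open>0 < j\<close> by (simp add: child_def)
  obtain d where d: "child j (a, b) = (fst (child j (a, b)), d)"
    by (simp add: child_def)
  have "slope (Flam lam (Suc n)) c (fst (child j (a, b))) \<noteq> slope (Flam lam (Suc n)) (fst (child j (a, b))) d"
    using slope_Flam_Suc_child[OF assms(2) _ c, where lam = lam]
      slope_Flam_Suc_child[OF assms(2) assms(4) d, where lam = lam]
      bump_slope_neq[OF assms(3,4)] slope_jump_pos[OF assms(1), THEN less_imp_neq] assms(4)
    by (simp add: less_imp_diff_less)
  moreover have "(c, fst (child j (a, b))) \<in> gen (Suc n)" "(fst (child j (a, b)), d) \<in> gen (Suc n)"
    using child_in_gen_Suc[OF assms(2), of "j - 1"] child_in_gen_Suc[OF assms(2), of j] assms(4) c d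
    by simp_all
  ultimately show ?thesis unfolding kink_def by blast
qed

lemma gen_endpoints_kink:
  assumes "0 < lam" "(a, b) \<in> gen n"
  shows "0 < a \<Longrightarrow> kink lam n a" and "b < 1 \<Longrightarrow> kink lam n b"
proof -
  have "(0 < a \<longrightarrow> kink lam n a) \<and> (b < 1 \<longrightarrow> kink lam n b)"
    using assms(2)
  proof (induct n arbitrary: a b)
    case (Suc n)
    then obtain a0 b0 j where p: "(a0, b0) \<in> gen n" "j < 4" "child j (a0, b0) = (a, b)"
      unfolding gen_Suc_iff by fastforce
    have "kink lam (Suc n) a" if "0 < a"
    proof (cases "j = 0")
      case True
      then show ?thesis using p Suc.hyps[OF p(1)] that kink_Suc by (auto simp: child_simps)
    next
      case False
      then show ?thesis using kink_at_new_node[OF assms(1) p(1) _ p(2)] p(3) by auto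
    qed
    moreover have "kink lam (Suc n) b" if "b < 1"
    proof (cases "j = 3")
      case True
      then show ?thesis using p Suc.hyps[OF p(1)] that kink_Suc by (auto simp: child_simps)
    next
      case False
      have "b = fst (child (Suc j) (a0, b0))" using p(3) by (auto simp: child_def)
      then show ?thesis using kink_at_new_node[OF assms(1) p(1), of "Suc j"] False p(2) by simp
    qed
    ultimately show ?case by blast
  qed simp
  then show "0 < a \<Longrightarrow> kink lam n a" and "b < 1 \<Longrightarrow> kink lam n b" by blast+
qed

lemma not_affine_on_across_kink:
  assumes "kink lam n p" "p \<in> {c<..<d}"
  shows "\<not> affine_on (Flam lam n) {c<..<d}"
proof -
  obtain a b where ab: "(a, p) \<in> gen n" "(p, b) \<in> gen n"
    "slope (Flam lam n) a p \<noteq> slope (Flam lam n) p b"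
    using assms(1) unfolding kink_def by blast
  show ?thesis
    using not_affine_on_across_corner[OF Flam_has_slope_on_gen[OF ab(1)] Flam_has_slope_on_gen[OF ab(2)]
        _ _ ab(3) assms(2)] gen_bounds[OF ab(1)] gen_bounds[OF ab(2)] by simp
qed

lemma affine_interval_subset_gen:
  assumes "0 < lam" "(l, h) \<in> gen n" "x \<in> {l<..<h}" "x \<in> {c<..<d}" "{c<..<d} \<subseteq> {0..1}"
    and "affine_on (Flam lam n) {c<..<d}"
  shows "{c<..<d} \<subseteq> {l<..<h}"
proof -
  have "0 \<le> c" "d \<le> 1"
    using assms(4,5) greaterThanLessThan_subseteq_atLeastAtMost_iff[of c d 0 1] by auto
  have "l \<le> c"
  proof (rule ccontr)
    assume "\<not> l \<le> c"
    then have "kink lam n l" using gen_endpoints_kink(1)[OF assms(1,2)] \<open>0 \<le> c\<close> by simp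
    moreover have "l \<in> {c<..<d}" using assms(3,4) \<open>\<not> l \<le> c\<close> by auto
    ultimately show False using not_affine_on_across_kink assms(6) by blast
  qed
  moreover have "h \<ge> d"
  proof (rule ccontr)
    assume "\<not> h \<ge> d"
    then have "kink lam n h" using gen_endpoints_kink(2)[OF assms(1,2)] \<open>d \<le> 1\<close> by simp
    moreover have "h \<in> {c<..<d}" using assms(3,4) \<open>\<not> h \<ge> d\<close> by auto
    ultimately show False using not_affine_on_across_kink assms(6) by blast
  qed
  ultimately show ?thesis by auto
qed

section \<open>Symbolic dynamics\<close>

lemma u_less_4: "u n x < 4"
  by (simp add: u_def U_def)

lemma beta_Suc: "beta i x (Suc n) = beta i x n + (if u n x = i then 1 else 0)"
proof -
  have "{k. k < Suc n \<and> u k x = i}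
      = (if u n x = i then insert n {k. k < n \<and> u k x = i} else {k. k < n \<and> u k x = i})"
    by (auto simp: less_Suc_eq)
  then show ?thesis unfolding beta_def by simp
qed

lemma eps_cases: "eps n x = 1 \<or> eps n x = -1"
  by (cases "even (beta 2 x n)") (simp_all add: eps_def)

lemma ell_pos: "0 < ell n x"
  by (simp add: ell_def)

definition bn :: "nat \<Rightarrow> real \<Rightarrow> real" where
  "bn n x = an n x + eps n x * ell n x"

lemma In_eq: "In n x = {min (an n x) (bn n x)<..<max (an n x) (bn n x)}"
  by (simp add: In_def bn_def)

lemma sgn_bn_minus_an: "sgn (bn n x - an n x) = eps n x"
  using eps_cases[of n x] ell_pos[of n x] by (auto simp: bn_def)

text \<open>\<open>branch j\<close> inverts \<open>T\<close> on the piece where \<open>U = j\<close>.\<close>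
definition branch :: "nat \<Rightarrow> real \<Rightarrow> real" where
  "branch j y = (if j = 2 then node 3 - y * (node 3 - node 2) else node j + y * (node (Suc j) - node j))"

lemma branch_affine: "branch j y = branch j 0 + y * (branch j 1 - branch j 0)"
  by (simp add: branch_def algebra_simps)

lemma branch_T:
  assumes "y \<in> {0..1}" shows "T y \<in> {0..1} \<and> branch (U y) (T y) = y"
proof -
  consider "y < 1/3" | "1/3 \<le> y" "y < 1/2" | "1/2 \<le> y" "y < 2/3" | "2/3 \<le> y"
    by linarith
  then show ?thesis
    by cases (use assms in \<open>simp_all add: T_def U_def branch_def node_def diff_divide_distrib\<close>)
qed

lemma an_bn_Suc:
  "an (Suc n) x = an n x + branch (u n x) 0 * (bn n x - an n x)"
  "bn (Suc n) x = an n x + branch (u n x) 1 * (bn n x - an n x)"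
proof -
  have digits: "u n x = 0 \<or> u n x = 1 \<or> u n x = 2 \<or> u n x = 3"
    using less_4_cases[OF u_less_4] .
  have "ut n x = branch (u n x) 0"
    using digits by (auto simp: u_def U_def ut_def Ut_def branch_def node_def split: if_splits)
  moreover have "eps (Suc n) x * ell (Suc n) x = (branch (u n x) 1 - branch (u n x) 0) * (eps n x * ell n x)"
    using digits by (auto simp: eps_def ell_def beta2_def beta_Suc branch_def node_def)
  ultimately show "an (Suc n) x = an n x + branch (u n x) 0 * (bn n x - an n x)"
    "bn (Suc n) x = an n x + branch (u n x) 1 * (bn n x - an n x)"
    by (simp_all add: an_def bn_def algebra_simps)
qed

lemma orbit_position:
  assumes "x \<in> {0..1}"
  shows "(T ^^ n) x \<in> {0..1} \<and> x = an n x + (T ^^ n) x * (bn n x - an n x)"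
proof (induct n)
  case 0
  then show ?case using assms by (simp add: an_def bn_def eps_def ell_def beta2_def beta_def)
next
  case (Suc n)
  define Y where "Y = (T ^^ n) x"
  define Z where "Z = T Y"
  have Z: "Z \<in> {0..1}" "Y = branch (u n x) Z"
    using branch_T Suc unfolding Y_def Z_def u_def by auto
  have "x = an n x + Y * (bn n x - an n x)" using Suc unfolding Y_def by simp
  then have "x = an (Suc n) x + Z * (bn (Suc n) x - an (Suc n) x)"
    unfolding an_bn_Suc Z(2) branch_affine[of "u n x" Z] by (simp add: algebra_simps)
  then show ?case using Z(1) unfolding Z_def Y_def by simp
qed

lemma orbit_avoids_0_1:
  assumes "x \<notin> E" shows "(T ^^ n) x \<noteq> 0" "(T ^^ n) x \<noteq> 1"
proof -
  have digit_eq: "u k x = U p" if "(T ^^ n) x = p" "T p = p" "n \<le> k" for p k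
  proof -
    have "(T ^^ k) x = (T ^^ (k - n)) ((T ^^ n) x)"
      using \<open>n \<le> k\<close> funpow_add[of "k - n" n T] by simp
    then show ?thesis using that funpow_fixed[of T p] by (simp add: u_def)
  qed
  have "T 0 = 0" "T 1 = 1" "U 0 = 0" "U 1 = 3" by (simp_all add: T_def U_def)
  then have "(T ^^ n) x = 0 \<Longrightarrow> \<forall>k\<ge>n. u k x = 0" "(T ^^ n) x = 1 \<Longrightarrow> \<forall>k\<ge>n. u k x = 3"
    using digit_eq by auto
  then show "(T ^^ n) x \<noteq> 0" "(T ^^ n) x \<noteq> 1"
    using assms unfolding E_def by blast+
qed

lemma mem_In:
  assumes "x \<in> {0..1}" "x \<notin> E" shows "x \<in> In n x"
proof -
  have "0 < (T ^^ n) x" "(T ^^ n) x < 1" "x = an n x + (T ^^ n) x * (bn n x - an n x)"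
    using orbit_position[OF assms(1), of n] orbit_avoids_0_1[OF assms(2), of n] by auto
  moreover have "an n x \<noteq> bn n x" using ell_pos[of n x] eps_cases[of n x] by (auto simp: bn_def)
  ultimately show ?thesis
    using between_in_Ioo[of "an n x" "bn n x" "(T ^^ n) x"] unfolding In_eq by simp
qed

lemma In_Suc_child:
  assumes "(min (an n x) (bn n x), max (an n x) (bn n x)) \<in> gen n"
  shows "(min (an (Suc n) x) (bn (Suc n) x), max (an (Suc n) x) (bn (Suc n) x)) \<in> gen (Suc n)"
    and "slope (Flam lam (Suc n)) (an (Suc n) x) (bn (Suc n) x)
      = slope (Flam lam n) (an n x) (bn n x)
        + eps n x * slope_jump lam (slope (Flam lam n) (an n x) (bn n x)) * bump_slope (u n x)"
proof -
  define m where "m = slope (Flam lam n) (an n x) (bn n x)"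
  define p q j where "p = an n x" and "q = bn n x" and "j = u n x"
  define p' q' where "p' = p + node j * (q - p)" and "q' = p + node (Suc j) * (q - p)"
  have j: "j < 4" unfolding j_def by (rule u_less_4)
  have ends: "(an (Suc n) x, bn (Suc n) x) = (if j = 2 then (q', p') else (p', q'))"
    unfolding an_bn_Suc p'_def q'_def p_def q_def j_def by (simp add: branch_def)
  have "(min p' q', max p' q') \<in> gen (Suc n)"
    "slope (Flam lam (Suc n)) p' q' = m + eps n x * slope_jump lam m * bump_slope j"
    using oriented_child(1)[OF assms[folded p_def q_def] j p'_def q'_def]
      oriented_child(2)[where lam = lam, OF assms[folded p_def q_def] j p'_def q'_def]
      sgn_bn_minus_an[of n x]
    unfolding m_def p_def q_def by simp_all
  then show "(min (an (Suc n) x) (bn (Suc n) x), max (an (Suc n) x) (bn (Suc n) x)) \<in> gen (Suc n)"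
    and "slope (Flam lam (Suc n)) (an (Suc n) x) (bn (Suc n) x)
      = m + eps n x * slope_jump lam m * bump_slope (u n x)"
    using ends unfolding j_def by (auto simp: min.commute max.commute slope_commute split: if_splits)
qed

lemma In_gen_and_slope_sgn:
  fixes lam :: real
  assumes "1/6 < lam"
  shows "(min (an n x) (bn n x), max (an n x) (bn n x)) \<in> gen n
    \<and> sgn (slope (Flam lam n) (an n x) (bn n x)) = sgn (real (beta2 1 2 x n)) * eps n x"
proof (induct n)
  case 0
  then show ?case by (simp add: an_def bn_def eps_def ell_def beta2_def beta_def slope_def)
next
  case (Suc n)
  define m where "m = slope (Flam lam n) (an n x) (bn n x)"
  note child = In_Suc_child(1)[OF conjunct1[OF Suc]]
    In_Suc_child(2)[where lam = lam, OF conjunct1[OF Suc], folded m_def]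
  have IH: "sgn m = sgn (real (beta2 1 2 x n)) * eps n x" using Suc m_def by simp
  have eps: "eps (Suc n) x = (if u n x = 2 then - eps n x else eps n x)"
    by (simp add: eps_def beta_Suc)
  have beta: "beta2 1 2 x (Suc n) = beta2 1 2 x n + (if u n x = 1 \<or> u n x = 2 then 1 else 0)"
    by (auto simp: beta2_def beta_Suc)
  have dominant: "sgn (m + e * slope_jump lam m) = e" if "e = 1 \<or> e = -1" for e
    using sgn_add_dominant[OF abs_less_slope_jump[OF assms] that] .
  have "sgn (slope (Flam lam (Suc n)) (an (Suc n) x) (bn (Suc n) x))
      = sgn (real (beta2 1 2 x (Suc n))) * eps (Suc n) x"
    using less_4_cases[OF u_less_4[of n x]]
  proof (elim disjE)
    assume "u n x = 1"
    then show ?thesis using child(2) eps beta dominant eps_cases[of n x]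
      by (simp add: bump_slope_def)
  next
    assume "u n x = 2"
    then show ?thesis using child(2) eps beta dominant[of "- eps n x"] eps_cases[of n x]
      by (auto simp: bump_slope_def numeral_eq_Suc)
  qed (use child(2) eps beta IH in \<open>simp_all add: bump_slope_def numeral_eq_Suc\<close>)
  then show ?case using child(1) by blast
qed

theorem lemma3p2:
  fixes lam x :: real and n :: nat
  assumes "1/6 < lam" and "lam < 5/6"
    and "x \<in> {0..1}" and "x \<notin> E"
  shows "x \<in> In n x \<and> In n x \<subseteq> {0..1} \<and> affine_on (Flam lam n) (In n x)
    \<and> (\<forall>c d. x \<in> {c<..<d} \<and> {c<..<d} \<subseteq> {0..1} \<and> affine_on (Flam lam n) {c<..<d}
            \<longrightarrow> {c<..<d} \<subseteq> In n x)
    \<and> Flam lam n differentiable (at x)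
    \<and> deriv (Flam lam n) x = (Flam lam n x - Flam lam n (an n x)) / (x - an n x)
    \<and> sgn (deriv (Flam lam n) x) = sgn (real (beta2 1 2 x n)) * eps n x"
proof -
  define l h m where "l = min (an n x) (bn n x)" and "h = max (an n x) (bn n x)"
    and "m = slope (Flam lam n) (an n x) (bn n x)"
  have gen: "(l, h) \<in> gen n" and sgn_m: "sgn m = sgn (real (beta2 1 2 x n)) * eps n x"
    using In_gen_and_slope_sgn[OF assms(1)] unfolding l_def h_def m_def by auto
  have In: "In n x = {l<..<h}" unfolding In_eq l_def h_def ..
  have "0 \<le> l" "h \<le> 1" using gen_bounds[OF gen] by auto
  have "x \<in> {l<..<h}" using mem_In[OF assms(3,4), of n] In by simp
  have slope_on: "has_slope_on (Flam lam n) m {l..h}"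
    using Flam_has_slope_on_gen[OF gen] unfolding l_def h_def m_def slope_min_max .
  then have slope_on_In: "has_slope_on (Flam lam n) m (In n x)"
    unfolding In by (rule has_slope_on_subset) auto
  then have "affine_on (Flam lam n) (In n x)" unfolding affine_on_iff_has_slope_on ..
  have deriv: "(Flam lam n has_field_derivative m) (at x)"
    using has_slope_on_imp_has_field_derivative[OF slope_on_In] \<open>x \<in> {l<..<h}\<close> In by simp
  have "an n x \<in> {l..h}" "an n x \<noteq> x"
    using \<open>x \<in> {l<..<h}\<close> unfolding l_def h_def by auto
  then have "(Flam lam n x - Flam lam n (an n x)) / (x - an n x) = m"
    using slope_eq_if_has_slope_on[OF slope_on, of "an n x" x] \<open>x \<in> {l<..<h}\<close>
    by (auto simp: slope_def)
  moreover have "\<forall>c d. x \<in> {c<..<d} \<and> {c<..<d} \<subseteq> {0..1} \<and> affine_on (Flam lam n) {c<..<d}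
      \<longrightarrow> {c<..<d} \<subseteq> In n x"
    using affine_interval_subset_gen[OF _ gen \<open>x \<in> {l<..<h}\<close>, of lam] assms(1) In by simp
  ultimately show ?thesis
    using \<open>x \<in> {l<..<h}\<close> \<open>0 \<le> l\<close> \<open>h \<le> 1\<close> In sgn_m DERIV_imp_deriv[OF deriv]
      \<open>affine_on (Flam lam n) (In n x)\<close> real_differentiable_def deriv
    by auto
qed

end
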